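(* Let $G\in\mathscr G_d$ and let $\mu$ be a nonzero finite Borel measure on $S^{n-1}$ not concentrated on any closed hemisphere. If $\{K_i\}_{i\in\mathbb N}\subseteq\mathscr K^n_{(o)}$ satisfies $$\sup_{i\in\mathbb N}\int_{S^{n-1}}G(\xi,\rho_{K_i^*}(\xi))\,d\mu(\xi)<+\infty,$$ then there is a finite constant $R$ with $K_i\subseteq RB^n$ for all $i\in\mathbb N$.
   Context: $S^{n-1}$ unit sphere, $B^n$ unit ball of $\mathbb R^n$, $n\ge2$. $\mathscr K^n_{(o)}$: compact convex sets with the origin in their interior; $\rho_K(x)=\max\{t\ge0:tx\in K\}$, $K^*=\{x:x\cdot y\le1\ \forall y\in K\}$. $\mathscr G_d$ is the set of $G:S^{n-1}\times(0,\infty)\to(0,\infty)$ such that $G$ and $G_t=\partial G/\partial t$ are continuous, and for each $u\in S^{n-1}$: $G_t(u,\cdot)<0$ on $(0,\infty)$, $\lim_{t\to0^+}G(u,t)=\infty$, $\lim_{t\to\infty}G(u,t)=0$. $\mu$ is not concentrated on any closed hemisphere if $\int_{S^{n-1}}(u\cdot\xi)_+\,d\mu(\xi)>0$ for all $u\in S^{n-1}$. *)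

theory Defs
  imports "HOL-Analysis.Analysis"
begin

definition radial_fun :: "'a::euclidean_space set \<Rightarrow> 'a \<Rightarrow> real" where
  "radial_fun K x = Sup {t. t \<ge> 0 \<and> t *\<^sub>R x \<in> K}"

definition polar_body :: "'a::euclidean_space set \<Rightarrow> 'a set" where
  "polar_body K = {x. \<forall>y\<in>K. x \<bullet> y \<le> 1}"

definition convex_bodies_o :: "'a::euclidean_space set set" where
  "convex_bodies_o = {K. compact K \<and> convex K \<and> 0 \<in> interior K}"

definition class_Gd :: "('a::euclidean_space \<Rightarrow> real \<Rightarrow> real) set" where
  "class_Gd = {G.
     (\<forall>u\<in>sphere 0 1. \<forall>t>0. G u t > 0) \<and>
     continuous_on (sphere 0 1 \<times> {0<..}) (\<lambda>(u,t). G u t) \<and>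
     (\<exists>Gt. (\<forall>u\<in>sphere 0 1. \<forall>t>0. ((G u) has_real_derivative Gt u t) (at t)) \<and>
           continuous_on (sphere 0 1 \<times> {0<..}) (\<lambda>(u,t). Gt u t) \<and>
           (\<forall>u\<in>sphere 0 1. \<forall>t>0. Gt u t < 0)) \<and>
     (\<forall>u\<in>sphere 0 1. filterlim (G u) at_top (at_right 0)) \<and>
     (\<forall>u\<in>sphere 0 1. ((G u) \<longlongrightarrow> 0) at_top)}"

end

theory Submission
  imports Defs
begin

text \<open>If the K_i were unbounded, there would be points x_i \<in> K_i with |x_i| \<rightarrow> \<infinity> whose
directions accumulate at some u \<in> S^{n-1}. Since \<mu> is not concentrated on a closed hemisphere,
some cap A = {\<xi>. u \<cdot> \<xi> \<ge> \<delta>} with \<delta> > 0 has positive measure, and on A eventually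
x_i \<cdot> \<xi> \<ge> |x_i| \<delta>/2, so \<rho>_{K_i^*}(\<xi>) \<le> 2/(|x_i| \<delta>) \<rightarrow> 0. As G is decreasing in t and blows
up at 0, monotone convergence makes the integrals over A unbounded.\<close>

lemma radial_fun_polar_body_bounds:
  fixes K :: "'a::euclidean_space set"
  assumes "bounded K" "x \<in> K" "0 < x \<bullet> \<xi>"
  shows "0 < radial_fun (polar_body K) \<xi>" "radial_fun (polar_body K) \<xi> \<le> 1 / (x \<bullet> \<xi>)"
proof -
  let ?S = "{t. t \<ge> 0 \<and> t *\<^sub>R \<xi> \<in> polar_body K}"
  have ub: "t \<le> 1 / (x \<bullet> \<xi>)" if "t \<in> ?S" for t
  proof -
    from that assms(2) have "t * (x \<bullet> \<xi>) \<le> 1" by (auto simp: polar_body_def inner_commute)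
    thus ?thesis using assms(3) by (simp add: field_simps)
  qed
  obtain r where r: "r > 0" "\<forall>y\<in>K. norm y \<le> r"
    using assms(1) bounded_pos by metis
  have \<xi>: "\<xi> \<noteq> 0" using assms(3) by auto
  define s where "s = 1 / (r * norm \<xi>)"
  have s_pos: "s > 0" using r \<xi> by (simp add: s_def)
  have "(s *\<^sub>R \<xi>) \<bullet> y \<le> 1" if "y \<in> K" for y
  proof -
    have "(s *\<^sub>R \<xi>) \<bullet> y \<le> norm (s *\<^sub>R \<xi>) * norm y" by (rule norm_cauchy_schwarz)
    also have "\<dots> = norm y / r" using r \<xi> by (simp add: s_def)
    also have "\<dots> \<le> 1" using r that by simp
    finally show ?thesis .
  qed
  hence "s \<in> ?S" using s_pos by (auto simp: polar_body_def)
  moreover have "bdd_above ?S" using ub by (rule bdd_aboveI)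
  ultimately have "s \<le> Sup ?S" by (rule cSup_upper)
  thus "0 < radial_fun (polar_body K) \<xi>" using s_pos by (simp add: radial_fun_def)
  show "radial_fun (polar_body K) \<xi> \<le> 1 / (x \<bullet> \<xi>)"
    unfolding radial_fun_def using \<open>s \<in> ?S\<close> ub by (intro cSup_least) blast+
qed

lemma class_Gd_antimono:
  assumes G: "G \<in> class_Gd" and u: "u \<in> sphere 0 1" and "0 < a" "a \<le> b"
  shows "G u b \<le> G u a"
proof (cases "a = b")
  case False
  from G obtain Gt where Gt:
    "\<forall>u\<in>sphere 0 1. \<forall>t>0. (G u has_real_derivative Gt u t) (at t)"
    "\<forall>u\<in>sphere 0 1. \<forall>t>0. Gt u t < 0"
    unfolding class_Gd_def by blast
  have "G u b < G u a"
  proof (rule DERIV_neg_imp_decreasing[where f = "G u"])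
    show "a < b" using False \<open>a \<le> b\<close> by simp
    fix t assume "a \<le> t" "t \<le> b"
    hence "t > 0" using \<open>0 < a\<close> by simp
    thus "\<exists>y. (G u has_real_derivative y) (at t) \<and> y < 0" using Gt u by blast
  qed
  thus ?thesis by simp
qed simp

lemma class_Gd_continuous_on_sphere:
  assumes G: "G \<in> class_Gd" and "t > 0"
  shows "continuous_on (sphere 0 1) (\<lambda>\<xi>. G \<xi> t)"
proof -
  have "continuous_on (sphere 0 1 \<times> {0<..}) (\<lambda>(u, t). G u t)"
    using G unfolding class_Gd_def by blast
  hence "continuous_on (sphere 0 1) ((\<lambda>(u, t). G u t) \<circ> (\<lambda>\<xi>. (\<xi>, t)))"
    using \<open>t > 0\<close> by (intro continuous_on_compose continuous_intros)
                    (auto elim: continuous_on_subset)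
  thus ?thesis by (simp add: o_def)
qed

lemma class_Gd_le_at_radial_fun_polar_body:
  assumes G: "G \<in> class_Gd" and "bounded K" "x \<in> K" "\<xi> \<in> sphere 0 1" "t > 0" "1 / t \<le> x \<bullet> \<xi>"
  shows "G \<xi> t \<le> G \<xi> (radial_fun (polar_body K) \<xi>)"
proof -
  have x\<xi>: "0 < x \<bullet> \<xi>" using assms(5,6) by (smt (verit) divide_pos_pos)
  note \<rho> = radial_fun_polar_body_bounds[OF assms(2,3) x\<xi>]
  have "1 / (x \<bullet> \<xi>) \<le> t" using assms(5,6) x\<xi> by (simp add: field_simps)
  with \<rho> show ?thesis using class_Gd_antimono[OF G assms(4)] by fastforce
qed

lemma integral_pos_part_pos_imp_superlevel_set_not_null:
  fixes f :: "'a \<Rightarrow> real"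
  assumes f: "f \<in> borel_measurable M" and pos: "0 < (\<integral>x. max 0 (f x) \<partial>M)"
  obtains \<delta> where "\<delta> > 0" "emeasure M {x \<in> space M. \<delta> \<le> f x} \<noteq> 0"
proof -
  have "\<exists>\<delta>>0. emeasure M {x \<in> space M. \<delta> \<le> f x} \<noteq> 0"
  proof (rule ccontr)
    assume "\<not> ?thesis"
    hence null: "{x \<in> space M. inverse (real (Suc n)) \<le> f x} \<in> null_sets M" for n
      using f by (auto simp: null_sets_def)
    have "AE x in M. f x < inverse (real (Suc n))" for n
      by (rule AE_I'[OF null[of n]]) auto
    hence "AE x in M. \<forall>n. f x < inverse (real (Suc n))"
      by (simp add: AE_all_countable)
    hence "AE x in M. max 0 (f x) = 0"
    proof eventually_elim
      fix x assume below: "\<forall>n. f x < inverse (real (Suc n))"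
      show "max 0 (f x) = 0"
      proof (rule ccontr)
        assume "max 0 (f x) \<noteq> 0"
        hence "0 < f x" by (simp add: max_def split: if_splits)
        then obtain n where "inverse (real (Suc n)) < f x"
          using ex_inverse_of_nat_less by (metis gr0_implies_Suc)
        with below show False by (meson less_asym)
      qed
    qed
    hence "(\<integral>x. max 0 (f x) \<partial>M) = (\<integral>x. 0 \<partial>M)"
      using f by (intro integral_cong_AE) auto
    with pos show False by simp
  qed
  with that show thesis by blast
qed

lemma class_Gd_SUP_at_zero:
  assumes G: "G \<in> class_Gd" and u: "u \<in> sphere 0 1"
  shows "incseq (\<lambda>k. ennreal (G u (inverse (real (Suc k)))))"
    and "(SUP k. ennreal (G u (inverse (real (Suc k))))) = \<infinity>"
proof -
  show inc: "incseq (\<lambda>k. ennreal (G u (inverse (real (Suc k)))))"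
  proof (rule incseq_SucI)
    fix k
    show "ennreal (G u (inverse (real (Suc k)))) \<le> ennreal (G u (inverse (real (Suc (Suc k)))))"
      by (intro ennreal_leI class_Gd_antimono[OF G u]) (simp_all add: field_simps)
  qed
  have "filterlim (\<lambda>k. inverse (real (Suc k))) (at_right 0) sequentially"
    using LIMSEQ_inverse_real_of_nat by (auto intro!: tendsto_imp_filterlim_at_right)
  hence "filterlim (\<lambda>k. G u (inverse (real (Suc k)))) at_top sequentially"
    using G u unfolding class_Gd_def by (auto intro: filterlim_compose)
  hence "(\<lambda>k. ennreal (G u (inverse (real (Suc k))))) \<longlonglongrightarrow> \<infinity>"
    by (simp add: ennreal_tendsto_top_eq_at_top)
  thus "(SUP k. ennreal (G u (inverse (real (Suc k))))) = \<infinity>"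
    using LIMSEQ_SUP[OF inc] by (rule LIMSEQ_unique[symmetric])
qed

lemma nn_integral_class_Gd_unbounded:
  fixes \<mu> :: "'a::euclidean_space measure"
  assumes G: "G \<in> class_Gd"
    and sets: "sets \<mu> = sets (restrict_space borel (sphere (0::'a) 1))"
    and A: "A \<in> sets \<mu>" "emeasure \<mu> A \<noteq> 0"
    and B: "B < \<infinity>"
  obtains t where "t > 0" "B < (\<integral>\<^sup>+\<xi>\<in>A. ennreal (G \<xi> t) \<partial>\<mu>)"
proof -
  have A_sphere: "A \<subseteq> sphere 0 1"
    using sets.sets_into_space[OF A(1)] sets_eq_imp_space_eq[OF sets]
    by (simp add: space_restrict_space)
  define f where "f k \<xi> = ennreal (G \<xi> (inverse (real (Suc k)))) * indicator A \<xi>" for k \<xi>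
  have f_inc: "incseq f"
  proof (rule incseq_SucI, rule le_funI)
    fix k \<xi>
    show "f k \<xi> \<le> f (Suc k) \<xi>"
    proof (cases "\<xi> \<in> A")
      case True
      with A_sphere have "\<xi> \<in> sphere 0 1" by blast
      from incseq_SucD[OF class_Gd_SUP_at_zero(1)[OF G this]] True show ?thesis
        by (simp add: f_def)
    qed (simp add: f_def)
  qed
  have f_meas: "f k \<in> borel_measurable \<mu>" for k
  proof -
    have "(\<lambda>\<xi>. G \<xi> (inverse (real (Suc k)))) \<in> borel_measurable \<mu>"
      using borel_measurable_continuous_on_restrict[OF class_Gd_continuous_on_sphere[OF G]]
      by (simp add: measurable_cong_sets[OF sets refl])
    thus ?thesis
      unfolding f_def using A(1)
      by (intro borel_measurable_times_ennreal borel_measurable_indicator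
            measurable_compose[OF _ measurable_ennreal])
  qed
  have "(SUP k. f k \<xi>) = \<infinity> * indicator A \<xi>" for \<xi>
  proof (cases "\<xi> \<in> A")
    case True
    with A_sphere have "\<xi> \<in> sphere 0 1" by blast
    from class_Gd_SUP_at_zero(2)[OF G this] True show ?thesis by (simp add: f_def)
  qed (simp add: f_def)
  hence "(SUP k. integral\<^sup>N \<mu> (f k)) = (\<integral>\<^sup>+\<xi>. \<infinity> * indicator A \<xi> \<partial>\<mu>)"
    using nn_integral_monotone_convergence_SUP[OF f_inc f_meas] by simp
  also have "\<dots> = \<infinity>"
    using A by (simp only: nn_integral_cmult_indicator) (simp add: ennreal_top_mult)
  finally obtain k where "B < integral\<^sup>N \<mu> (f k)"
    using B by (auto simp: SUP_eq_top_iff)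
  thus thesis using that[of "inverse (real (Suc k))"] by (simp add: f_def[abs_def])
qed

lemma set_nn_integral_class_Gd_le_radial_fun_polar_body:
  assumes G: "G \<in> class_Gd" and K: "bounded K" "x \<in> K" and "t > 0" "A \<subseteq> sphere 0 1"
    and far: "\<And>\<xi>. \<xi> \<in> A \<Longrightarrow> 1 / t \<le> x \<bullet> \<xi>"
  shows "(\<integral>\<^sup>+\<xi>\<in>A. ennreal (G \<xi> t) \<partial>\<mu>)
      \<le> (\<integral>\<^sup>+\<xi>. ennreal (G \<xi> (radial_fun (polar_body K) \<xi>)) \<partial>\<mu>)"
proof (rule nn_integral_mono)
  fix \<xi>
  show "ennreal (G \<xi> t) * indicator A \<xi> \<le> ennreal (G \<xi> (radial_fun (polar_body K) \<xi>))"
  proof (cases "\<xi> \<in> A")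
    case True
    with \<open>A \<subseteq> sphere 0 1\<close> have "G \<xi> t \<le> G \<xi> (radial_fun (polar_body K) \<xi>)"
      by (intro class_Gd_le_at_radial_fun_polar_body[OF G K _ \<open>t > 0\<close> far]) auto
    with True show ?thesis by (simp add: ennreal_leI)
  qed simp
qed

lemma inner_ge_near_direction:
  fixes x u \<xi> :: "'a::real_inner"
  assumes "norm \<xi> \<le> 1" "\<delta> \<le> u \<bullet> \<xi>" "dist (sgn x) u \<le> \<delta> / 2"
  shows "norm x * (\<delta> / 2) \<le> x \<bullet> \<xi>"
proof -
  have "\<bar>(sgn x - u) \<bullet> \<xi>\<bar> \<le> norm (sgn x - u) * norm \<xi>" by (rule Cauchy_Schwarz_ineq2)
  also have "\<dots> \<le> norm (sgn x - u)" using assms(1) by (simp add: mult_left_le)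
  also have "\<dots> \<le> \<delta> / 2" using assms(3) by (simp add: dist_norm)
  finally have "\<delta> / 2 \<le> sgn x \<bullet> \<xi>"
    using assms(2) unfolding inner_diff_left abs_le_iff by linarith
  hence "norm x * (\<delta> / 2) \<le> norm x * (sgn x \<bullet> \<xi>)" by (rule mult_left_mono) simp
  also have "\<dots> = x \<bullet> \<xi>" by (cases "x = 0") (simp_all add: sgn_div_norm)
  finally show ?thesis .
qed

lemma unbounded_family_obtains_direction:
  fixes K :: "'i \<Rightarrow> 'a::euclidean_space set"
  assumes "\<not> (\<exists>R. \<forall>i. K i \<subseteq> cball 0 R)"
  obtains u where "u \<in> sphere 0 1"
    "\<And>\<delta> T. \<delta> > 0 \<Longrightarrow> \<exists>i. \<exists>x\<in>K i. \<forall>\<xi>. norm \<xi> \<le> 1 \<longrightarrow> \<delta> \<le> u \<bullet> \<xi> \<longrightarrow> T \<le> x \<bullet> \<xi>"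
proof -
  have "\<exists>i x. x \<in> K i \<and> real n < norm x" for n :: nat
  proof -
    from assms obtain i where "\<not> K i \<subseteq> cball 0 (real n)" by blast
    thus ?thesis by (auto simp: subset_iff not_le)
  qed
  then obtain I X where X: "\<And>n. X n \<in> K (I n)" "\<And>n. real n < norm (X n)" by metis
  have "0 < norm (X n)" for n using X(2)[of n] by (smt (verit) of_nat_0_le_iff)
  hence sgn_X: "sgn (X n) \<in> sphere 0 1" for n by (simp add: norm_sgn)
  obtain u r where u: "u \<in> sphere 0 1" and r: "strict_mono r"
    and lim: "((\<lambda>n. sgn (X n)) \<circ> r) \<longlonglongrightarrow> u"
    using compact_sphere[of "0::'a" 1] sgn_X unfolding compact_def by metis
  show thesis
  proof (rule that[OF u])
    fix \<delta> T :: real assume "\<delta> > 0"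
    then obtain N where N: "\<And>n. n \<ge> N \<Longrightarrow> dist (sgn (X (r n))) u < \<delta> / 2"
      using lim \<open>\<delta> > 0\<close> unfolding lim_sequentially o_def by (meson half_gt_zero)
    define n where "n = max N (nat \<lceil>2 * T / \<delta>\<rceil>)"
    have "2 * T / \<delta> \<le> real n" unfolding n_def by linarith
    also have "\<dots> \<le> real (r n)" using seq_suble[OF r] by simp
    also have "\<dots> < norm (X (r n))" by (rule X(2))
    finally have "2 * T / \<delta> < norm (X (r n))" .
    hence T: "T \<le> norm (X (r n)) * (\<delta> / 2)" using \<open>\<delta> > 0\<close> by (simp add: field_simps)
    have near: "dist (sgn (X (r n))) u \<le> \<delta> / 2" using N[of n] by (simp add: n_def)
    have "\<forall>\<xi>. norm \<xi> \<le> 1 \<longrightarrow> \<delta> \<le> u \<bullet> \<xi> \<longrightarrow> T \<le> X (r n) \<bullet> \<xi>"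
      using inner_ge_near_direction[OF _ _ near] T by force
    thus "\<exists>i. \<exists>x\<in>K i. \<forall>\<xi>. norm \<xi> \<le> 1 \<longrightarrow> \<delta> \<le> u \<bullet> \<xi> \<longrightarrow> T \<le> x \<bullet> \<xi>"
      using X(1) by blast
  qed
qed

theorem lemma5p2:
  fixes G :: "'a::euclidean_space \<Rightarrow> real \<Rightarrow> real"
    and \<mu> :: "'a measure"
    and K :: "nat \<Rightarrow> 'a set"
  assumes dim: "DIM('a) \<ge> 2"
    and G: "G \<in> class_Gd"
    and mu_sets: "sets \<mu> = sets (restrict_space borel (sphere (0::'a) 1))"
    and mu_fin: "finite_measure \<mu>"
    and mu_nz: "emeasure \<mu> (space \<mu>) \<noteq> 0"
    and mu_nc: "\<forall>u\<in>sphere (0::'a) 1. (\<integral>\<xi>. max 0 (u \<bullet> \<xi>) \<partial>\<mu>) > 0"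
    and K: "\<forall>i. K i \<in> convex_bodies_o"
    and bnd: "(SUP i. \<integral>\<^sup>+ \<xi>. ennreal (G \<xi> (radial_fun (polar_body (K i)) \<xi>)) \<partial>\<mu>) < \<infinity>"
  shows "\<exists>R::real. \<forall>i. K i \<subseteq> cball 0 R"
proof (rule ccontr)
  assume "\<not> (\<exists>R::real. \<forall>i. K i \<subseteq> cball 0 R)"
  then obtain u where u: "u \<in> sphere 0 1"
    and far: "\<And>\<delta> T. \<delta> > 0 \<Longrightarrow> \<exists>i. \<exists>x\<in>K i. \<forall>\<xi>. norm \<xi> \<le> 1 \<longrightarrow> \<delta> \<le> u \<bullet> \<xi> \<longrightarrow> T \<le> x \<bullet> \<xi>"
    by (rule unbounded_family_obtains_direction) blast+
  have space: "space \<mu> = sphere 0 1"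
    using sets_eq_imp_space_eq[OF mu_sets] by (simp add: space_restrict_space)
  have meas: "(\<lambda>\<xi>. u \<bullet> \<xi>) \<in> borel_measurable \<mu>"
    using borel_measurable_continuous_on_restrict[of "sphere 0 1" "\<lambda>\<xi>. u \<bullet> \<xi>"]
    by (simp add: measurable_cong_sets[OF mu_sets refl] continuous_intros)
  obtain \<delta> where "\<delta> > 0" and cap: "emeasure \<mu> {\<xi> \<in> space \<mu>. \<delta> \<le> u \<bullet> \<xi>} \<noteq> 0"
    by (rule integral_pos_part_pos_imp_superlevel_set_not_null[OF meas mu_nc[rule_format, OF u]])
  define A where "A = {\<xi> \<in> space \<mu>. \<delta> \<le> u \<bullet> \<xi>}"
  have A: "A \<in> sets \<mu>"
    unfolding A_def by (rule borel_measurable_le[OF borel_measurable_const meas])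
  define S where "S = (SUP i. \<integral>\<^sup>+ \<xi>. ennreal (G \<xi> (radial_fun (polar_body (K i)) \<xi>)) \<partial>\<mu>)"
  have "S < \<infinity>" using bnd by (simp add: S_def)
  then obtain t where "t > 0" and t: "S < (\<integral>\<^sup>+\<xi>\<in>A. ennreal (G \<xi> t) \<partial>\<mu>)"
    by (rule nn_integral_class_Gd_unbounded[OF G mu_sets A cap[folded A_def]])
  obtain i x where x: "x \<in> K i" and x_far: "\<forall>\<xi>. norm \<xi> \<le> 1 \<longrightarrow> \<delta> \<le> u \<bullet> \<xi> \<longrightarrow> 1 / t \<le> x \<bullet> \<xi>"
    using far[OF \<open>\<delta> > 0\<close>, of "1 / t"] by blast
  have "bounded (K i)"
    using K[rule_format, of i] by (simp add: convex_bodies_o_def compact_imp_bounded)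
  have "A \<subseteq> sphere 0 1" unfolding A_def space by blast
  have "1 / t \<le> x \<bullet> \<xi>" if "\<xi> \<in> A" for \<xi>
    using that x_far unfolding A_def space by simp
  hence "(\<integral>\<^sup>+\<xi>\<in>A. ennreal (G \<xi> t) \<partial>\<mu>)
      \<le> (\<integral>\<^sup>+ \<xi>. ennreal (G \<xi> (radial_fun (polar_body (K i)) \<xi>)) \<partial>\<mu>)"
    by (rule set_nn_integral_class_Gd_le_radial_fun_polar_body[OF G \<open>bounded (K i)\<close> x
          \<open>t > 0\<close> \<open>A \<subseteq> sphere 0 1\<close>])
  also have "\<dots> \<le> S" unfolding S_def by (rule SUP_upper) simp
  finally show False using t by simp
qed

end
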